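(* Let $X$ be a discrete random variable and $U$ a continuously distributed random variable with $U\sim\mathrm{Unif}[0,1]$, and let $\mathcal{T}\subseteq\mathbb{R}$. Then $U$ is $\mathcal{T}$-independent of $X$ if and only if \[ \mathbb{E}\big(\Pr(X=x\mid U)\mid U\in(t_1,t_2)\big)=\Pr(X=x)\quad\text{for all }x\in\operatorname{supp}(X) \] for all $t_1,t_2\in\mathcal{T}\cup\{0,1\}$ with $t_1<t_2$.
   Context: $U$ is $\mathcal{T}$-independent of $X$ if $F_{U\mid X}(\tau\mid x)=F_U(\tau)$ for all $x\in\operatorname{supp}(X)$ and all $\tau\in\mathcal{T}$, where $F_{U\mid X}(\cdot\mid x)$ is the conditional cdf of $U$ given $X=x$ and $F_U$ the marginal cdf of $U$. *)

theory Defs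
  imports "HOL-Probability.Probability"
begin

definition disc_supp :: "'a measure \<Rightarrow> ('a \<Rightarrow> 'b) \<Rightarrow> 'b set" where
  "disc_supp M X = {x. \<P>(\<omega> in M. X \<omega> = x) > 0}"

definition cdf_rv :: "'a measure \<Rightarrow> ('a \<Rightarrow> real) \<Rightarrow> real \<Rightarrow> real" where
  "cdf_rv M U \<tau> = \<P>(\<omega> in M. U \<omega> \<le> \<tau>)"

definition cond_cdf_rv :: "'a measure \<Rightarrow> ('a \<Rightarrow> real) \<Rightarrow> ('a \<Rightarrow> 'b) \<Rightarrow> real \<Rightarrow> 'b \<Rightarrow> real" where
  "cond_cdf_rv M U X \<tau> x = \<P>(\<omega> in M. U \<omega> \<le> \<tau> \<bar> X \<omega> = x)"

definition T_indep :: "'a measure \<Rightarrow> real set \<Rightarrow> ('a \<Rightarrow> real) \<Rightarrow> ('a \<Rightarrow> 'b) \<Rightarrow> bool" where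
  "T_indep M T U X \<longleftrightarrow>
     (\<forall>x \<in> disc_supp M X. \<forall>\<tau> \<in> T. cond_cdf_rv M U X \<tau> x = cdf_rv M U \<tau>)"

definition cprob_given :: "'a measure \<Rightarrow> ('a \<Rightarrow> 'b) \<Rightarrow> 'b \<Rightarrow> ('a \<Rightarrow> real) \<Rightarrow> 'a \<Rightarrow> real" where
  "cprob_given M X x U =
     real_cond_exp M (vimage_algebra (space M) U borel) (indicator {\<omega> \<in> space M. X \<omega> = x})"

definition cexp_event :: "'a measure \<Rightarrow> ('a \<Rightarrow> real) \<Rightarrow> 'a set \<Rightarrow> real" where
  "cexp_event M Y A = (\<integral>\<omega>. Y \<omega> * indicator A \<omega> \<partial>M) / measure M A"

end

theory Submission
  imports Defs
begin

(* By the tower property, E(Pr(X = x | U) | t1 < U < t2) = Pr(X = x, t1 < U < t2) / Pr(t1 < U < t2).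
   As U has no atoms, the condition of the theorem therefore says that the covariance
   D t = Pr(X = x, U \<le> t) - Pr(X = x) Pr(U \<le> t) takes the same value at t1 and t2.
   Outside (0,1) the event U \<le> t has probability 0 or 1, so D vanishes there; hence D is
   constant on T \<union> {0,1} iff it vanishes on T, which is T-independence. *)

lemma eq_on_iff_eq_on_pairs_01:
  fixes D :: "real \<Rightarrow> 'b"
  assumes outside: "\<And>t. t \<notin> {0<..<1} \<Longrightarrow> D t = c" and Q: "\<And>t. t \<in> {0<..<1} \<Longrightarrow> Q 0 t"
  shows "(\<forall>t\<in>T. D t = c) \<longleftrightarrow>
    (\<forall>t1 \<in> T \<union> {0, 1}. \<forall>t2 \<in> T \<union> {0, 1}. t1 < t2 \<and> Q t1 t2 \<longrightarrow> D t2 = D t1)"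
proof (intro iffI ballI impI)
  fix t1 t2 assume "\<forall>t\<in>T. D t = c" "t1 \<in> T \<union> {0, 1}" "t2 \<in> T \<union> {0, 1}"
  then show "D t2 = D t1"
    using outside by auto
next
  fix t assume pairs: "\<forall>t1 \<in> T \<union> {0, 1}. \<forall>t2 \<in> T \<union> {0, 1}. t1 < t2 \<and> Q t1 t2 \<longrightarrow> D t2 = D t1"
    and "t \<in> T"
  show "D t = c"
  proof (cases "t \<in> {0<..<1}")
    case True
    then show ?thesis
      using pairs \<open>t \<in> T\<close> Q[OF True] outside[of 0] by auto
  qed (rule outside)
qed

lemma subalgebra_vimage_algebra:
  assumes "f \<in> measurable M N"
  shows "subalgebra M (vimage_algebra (space M) f N)"
  unfolding subalgebra_def using assms
  by (auto simp: sets_vimage_algebra_space measurable_iff_sets)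

lemma vimage_set_in_vimage_algebra:
  "S \<in> sets N \<Longrightarrow> {\<omega> \<in> X. f \<omega> \<in> S} \<in> sets (vimage_algebra X f N)"
  using in_vimage_algebra[of S N f X] by (simp add: vimage_def Int_def conj_commute)

lemma cexp_event_real_cond_exp_indicator:
  assumes "finite_measure M" "subalgebra M F" "E \<in> sets M" "A \<in> sets F"
  shows "cexp_event M (real_cond_exp M F (indicator E)) A = measure M (E \<inter> A) / measure M A"
proof -
  interpret finite_measure_subalgebra M F
    using assms(1,2) by (simp add: finite_measure_subalgebra_def finite_measure_subalgebra_axioms_def)
  have "A \<in> sets M"
    using assms(2,4) by (auto simp: subalgebra_def)
  have "integrable M (indicator E :: 'a \<Rightarrow> real)"
    using assms(3) by (simp add: integrable_indicator_iff less_top[symmetric])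
  then have "(\<integral>\<omega>. real_cond_exp M F (indicator E) \<omega> * indicator A \<omega> \<partial>M)
      = (\<integral>\<omega> \<in> A. indicator E \<omega> \<partial>M)"
    using real_cond_exp_intA[OF _ assms(4), of "indicator E"]
    by (simp add: set_lebesgue_integral_def mult.commute)
  also have "\<dots> = measure M (E \<inter> A)"
    using assms(3) \<open>A \<in> sets M\<close>
    by (simp add: set_lebesgue_integral_def indicator_inter_arith[symmetric] Int_commute)
  finally show ?thesis
    unfolding cexp_event_def by simp
qed

lemma measure_uniform_distributed:
  assumes "U \<in> borel_measurable M" "distr M lborel U = uniform_measure lborel A"
    and "emeasure lborel A \<noteq> 0" "emeasure lborel A \<noteq> \<infinity>" "S \<in> sets borel"
  shows "measure M {\<omega> \<in> space M. U \<omega> \<in> S} = measure lborel (A \<inter> S) / measure lborel A"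
proof -
  have "measure M {\<omega> \<in> space M. U \<omega> \<in> S} = measure (distr M lborel U) S"
    using assms(1,5) by (subst measure_distr) (auto simp: vimage_def Int_def conj_commute)
  then show ?thesis
    using assms(2-5) by simp
qed

definition event_cdf_cov :: "'a measure \<Rightarrow> ('a \<Rightarrow> real) \<Rightarrow> 'a set \<Rightarrow> real \<Rightarrow> real" where
  "event_cdf_cov M U E t =
     measure M (E \<inter> {\<omega> \<in> space M. U \<omega> \<le> t}) - measure M E * measure M {\<omega> \<in> space M. U \<omega> \<le> t}"

context prob_space
begin

lemma prob_Int_eq_0: "B \<in> events \<Longrightarrow> prob B = 0 \<Longrightarrow> prob (A \<inter> B) = 0"
  using finite_measure_mono[of "A \<inter> B" B] measure_nonneg[of M "A \<inter> B"] by simp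

lemma prob_Int_eq_prob:
  assumes "A \<in> events" "B \<in> events" "prob B = 1"
  shows "prob (A \<inter> B) = prob A"
proof -
  have "AE x in M. x \<in> B"
    using assms(2,3) prob_eq_1 by blast
  then show ?thesis
    using assms(1,2) by (intro measure_eq_AE) auto
qed

lemma prob_Int_Ioo_eq_diff:
  fixes U :: "'a \<Rightarrow> real"
  assumes U: "U \<in> borel_measurable M" and E: "E \<in> events" and "t1 \<le> t2"
    and no_atom: "prob {\<omega> \<in> space M. U \<omega> = t2} = 0"
  shows "prob (E \<inter> {\<omega> \<in> space M. U \<omega> \<in> {t1<..<t2}}) =
    prob (E \<inter> {\<omega> \<in> space M. U \<omega> \<le> t2}) - prob (E \<inter> {\<omega> \<in> space M. U \<omega> \<le> t1})"
proof -
  let ?le = "\<lambda>t. E \<inter> {\<omega> \<in> space M. U \<omega> \<le> t}"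
  let ?atom = "{\<omega> \<in> space M. U \<omega> = t2}"
  have "{\<omega> \<in> space M. U \<omega> \<le> t} \<in> events" for t
    using U by measurable
  then have sets: "?le t \<in> events" for t
    using E by blast
  have "?atom \<in> null_sets M"
    using U no_atom by (auto simp: emeasure_eq_measure)
  moreover have "E \<inter> {\<omega> \<in> space M. U \<omega> \<in> {t1<..<t2}} = (?le t2 - ?le t1) - ?atom"
    by auto
  ultimately have "prob (E \<inter> {\<omega> \<in> space M. U \<omega> \<in> {t1<..<t2}}) = prob (?le t2 - ?le t1)"
    using sets by (simp add: measure_Diff_null_set)
  also have "\<dots> = prob (?le t2) - prob (?le t1)"
    using sets \<open>t1 \<le> t2\<close> by (intro finite_measure_Diff) auto
  finally show ?thesis .
qed

context
  fixes U :: "'a \<Rightarrow> real"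
  assumes U_meas: "U \<in> borel_measurable M"
    and U_unif: "distr M lborel U = uniform_measure lborel {0..1}"
begin

lemma prob_unif01_in:
  "S \<in> sets borel \<Longrightarrow> prob {\<omega> \<in> space M. U \<omega> \<in> S} = measure lborel ({0..1} \<inter> S)"
  using measure_uniform_distributed[OF U_meas U_unif] by simp

lemma prob_unif01_eq: "prob {\<omega> \<in> space M. U \<omega> = t} = 0"
  using prob_unif01_in[of "{t}"] by (cases "t \<in> {0..1}") auto

lemma prob_unif01_le: "prob {\<omega> \<in> space M. U \<omega> \<le> t} = max 0 (min 1 t)"
proof -
  have "{0..1} \<inter> {..t} = (if t < 0 then {} else {0..min 1 t})"
    by auto
  then show ?thesis
    using prob_unif01_in[of "{..t}"] by simp
qed

lemma prob_unif01_Int_Ioo: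
  assumes "A \<in> events" "t1 \<le> t2"
  shows "prob (A \<inter> {\<omega> \<in> space M. U \<omega> \<in> {t1<..<t2}}) =
    prob (A \<inter> {\<omega> \<in> space M. U \<omega> \<le> t2}) - prob (A \<inter> {\<omega> \<in> space M. U \<omega> \<le> t1})"
  using prob_Int_Ioo_eq_diff[OF U_meas assms] prob_unif01_eq by simp

lemma prob_unif01_Ioo:
  assumes "t1 \<le> t2"
  shows "\<P>(\<omega> in M. U \<omega> \<in> {t1<..<t2}) = max 0 (min 1 t2) - max 0 (min 1 t1)"
  using prob_unif01_Int_Ioo[OF sets.top assms]
  by (simp add: prob_unif01_le Int_absorb1 Int_def)

lemma event_cdf_cov_unif01_outside:
  assumes "E \<in> events" "t \<notin> {0<..<1}"
  shows "event_cdf_cov M U E t = 0"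
proof -
  have le_set: "{\<omega> \<in> space M. U \<omega> \<le> t} \<in> events"
    using U_meas by measurable
  show ?thesis
  proof (cases "t \<le> 0")
    case True
    then show ?thesis
      using prob_Int_eq_0[OF le_set] by (simp add: event_cdf_cov_def prob_unif01_le)
  next
    case False
    then show ?thesis
      using assms prob_Int_eq_prob[OF assms(1) le_set] by (simp add: event_cdf_cov_def prob_unif01_le)
  qed
qed

lemma cexp_event_cond_exp_eq_prob_iff:
  assumes E: "E \<in> events" and "t1 < t2" and pos: "\<P>(\<omega> in M. U \<omega> \<in> {t1<..<t2}) > 0"
  shows "cexp_event M (real_cond_exp M (vimage_algebra (space M) U borel) (indicator E))
      {\<omega> \<in> space M. U \<omega> \<in> {t1<..<t2}} = prob E
    \<longleftrightarrow> event_cdf_cov M U E t2 = event_cdf_cov M U E t1"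
proof -
  let ?I = "{\<omega> \<in> space M. U \<omega> \<in> {t1<..<t2}}"
  let ?G = "\<lambda>t. prob {\<omega> \<in> space M. U \<omega> \<le> t}"
  have "?I \<in> sets (vimage_algebra (space M) U borel)"
    by (rule vimage_set_in_vimage_algebra) simp
  then have cexp: "cexp_event M (real_cond_exp M (vimage_algebra (space M) U borel) (indicator E)) ?I
      = prob (E \<inter> ?I) / prob ?I"
    by (rule cexp_event_real_cond_exp_indicator[OF finite_measure_axioms
          subalgebra_vimage_algebra[OF U_meas] E])
  have I: "prob ?I = ?G t2 - ?G t1"
    using prob_unif01_Ioo \<open>t1 < t2\<close> by (simp add: prob_unif01_le)
  show ?thesis
    unfolding cexp prob_unif01_Int_Ioo[OF E less_imp_le[OF \<open>t1 < t2\<close>]] I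
    using pos I by (auto simp: event_cdf_cov_def field_simps)
qed

lemma cdf_indep_event_iff_cond_exp:
  assumes E: "E \<in> events"
  shows "(\<forall>\<tau>\<in>T. prob (E \<inter> {\<omega> \<in> space M. U \<omega> \<le> \<tau>}) = prob E * prob {\<omega> \<in> space M. U \<omega> \<le> \<tau>}) \<longleftrightarrow>
    (\<forall>t1 \<in> T \<union> {0, 1}. \<forall>t2 \<in> T \<union> {0, 1}.
       t1 < t2 \<and> \<P>(\<omega> in M. U \<omega> \<in> {t1<..<t2}) > 0 \<longrightarrow>
       cexp_event M (real_cond_exp M (vimage_algebra (space M) U borel) (indicator E))
         {\<omega> \<in> space M. U \<omega> \<in> {t1<..<t2}} = prob E)"
proof -
  have "(\<forall>\<tau>\<in>T. prob (E \<inter> {\<omega> \<in> space M. U \<omega> \<le> \<tau>}) = prob E * prob {\<omega> \<in> space M. U \<omega> \<le> \<tau>})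
      \<longleftrightarrow> (\<forall>\<tau>\<in>T. event_cdf_cov M U E \<tau> = 0)"
    by (simp add: event_cdf_cov_def)
  also have "\<dots> \<longleftrightarrow> (\<forall>t1 \<in> T \<union> {0, 1}. \<forall>t2 \<in> T \<union> {0, 1}.
       t1 < t2 \<and> \<P>(\<omega> in M. U \<omega> \<in> {t1<..<t2}) > 0 \<longrightarrow>
       event_cdf_cov M U E t2 = event_cdf_cov M U E t1)"
  proof (rule eq_on_iff_eq_on_pairs_01)
    show "event_cdf_cov M U E t = 0" if "t \<notin> {0<..<1}" for t
      using event_cdf_cov_unif01_outside[OF E that] .
    show "\<P>(\<omega> in M. U \<omega> \<in> {0<..<t}) > 0" if "t \<in> {0<..<1}" for t
      using that by (subst prob_unif01_Ioo) auto
  qed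
  also have "\<dots> \<longleftrightarrow> (\<forall>t1 \<in> T \<union> {0, 1}. \<forall>t2 \<in> T \<union> {0, 1}.
       t1 < t2 \<and> \<P>(\<omega> in M. U \<omega> \<in> {t1<..<t2}) > 0 \<longrightarrow>
       cexp_event M (real_cond_exp M (vimage_algebra (space M) U borel) (indicator E))
         {\<omega> \<in> space M. U \<omega> \<in> {t1<..<t2}} = prob E)"
    using cexp_event_cond_exp_eq_prob_iff[OF E] by auto
  finally show ?thesis .
qed

end

end

theorem theorem3:
  fixes M :: "'a measure" and X :: "'a \<Rightarrow> 'b" and U :: "'a \<Rightarrow> real" and T :: "real set"
  assumes "prob_space M"
    and X_meas: "X \<in> measurable M (count_space UNIV)"
    and X_disc: "countable (X ` space M)"
    and U_meas: "U \<in> borel_measurable M"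
    and U_unif: "distr M lborel U = uniform_measure lborel {0..1}"
  shows "T_indep M T U X \<longleftrightarrow>
    (\<forall>t1 \<in> T \<union> {0, 1}. \<forall>t2 \<in> T \<union> {0, 1}.
       t1 < t2 \<and> \<P>(\<omega> in M. U \<omega> \<in> {t1<..<t2}) > 0 \<longrightarrow>
       (\<forall>x \<in> disc_supp M X.
          cexp_event M (cprob_given M X x U) {\<omega> \<in> space M. U \<omega> \<in> {t1<..<t2}}
          = \<P>(\<omega> in M. X \<omega> = x)))"
proof -
  \<comment> \<open>Only the events X = x enter.\<close>
  interpret prob_space M by fact
  let ?E = "\<lambda>x. {\<omega> \<in> space M. X \<omega> = x}"
  have E: "?E x \<in> events" for x
    using X_meas by measurable
  have "cond_cdf_rv M U X \<tau> x = cdf_rv M U \<tau> \<longleftrightarrow>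
      prob (?E x \<inter> {\<omega> \<in> space M. U \<omega> \<le> \<tau>}) = prob (?E x) * prob {\<omega> \<in> space M. U \<omega> \<le> \<tau>}"
    if "x \<in> disc_supp M X" for x \<tau>
  proof -
    have "{\<omega> \<in> space M. U \<omega> \<le> \<tau> \<and> X \<omega> = x} = ?E x \<inter> {\<omega> \<in> space M. U \<omega> \<le> \<tau>}"
      by blast
    then show ?thesis
      using that by (auto simp: cond_cdf_rv_def cdf_rv_def cond_prob_def disc_supp_def field_simps)
  qed
  then have "T_indep M T U X \<longleftrightarrow> (\<forall>x \<in> disc_supp M X. \<forall>\<tau>\<in>T.
      prob (?E x \<inter> {\<omega> \<in> space M. U \<omega> \<le> \<tau>}) = prob (?E x) * prob {\<omega> \<in> space M. U \<omega> \<le> \<tau>})"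
    by (simp add: T_indep_def)
  also have "\<dots> \<longleftrightarrow> (\<forall>x \<in> disc_supp M X. \<forall>t1 \<in> T \<union> {0, 1}. \<forall>t2 \<in> T \<union> {0, 1}.
       t1 < t2 \<and> \<P>(\<omega> in M. U \<omega> \<in> {t1<..<t2}) > 0 \<longrightarrow>
       cexp_event M (cprob_given M X x U) {\<omega> \<in> space M. U \<omega> \<in> {t1<..<t2}} = prob (?E x))"
    unfolding cprob_given_def using cdf_indep_event_iff_cond_exp[OF U_meas U_unif E] by simp
  finally show ?thesis
    by blast
qed

end
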